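(* Let $x_s<x_t$ be integers, let $C\ge 0$, and let $f:[x_s,x_t]\to\mathbb{R}$ be such that $([x_s,x_t],f)$ is an Ameso($C$) pair. Suppose there exist $x^0\in[x_s,x_t]$ and a positive integer $b$ with $[x^0,x^0+b]\subseteq[x_s,x_t]$ such that $f(x^0)=\min_{y\in[x^0,x^0+b]}f(y)$ and $f(x^0)+C\le\max_{y\in[x^0,x^0+b]}f(y)$. Then $f(x^0)=\min_{y\in[x^0,x_t]}f(y)$.
   Context: For integers $a\le b$, $[a,b]$ denotes the set of integers $\{a,a+1,\dots,b\}$. Floors and ceilings of vectors are taken componentwise. A set $D^n\subseteq\mathbb{Z}^n$ is an Ameso set if $\lceil(\vec x+\vec y)/2\rceil,\lfloor(\vec x+\vec y)/2\rfloor\in D^n$ for all $\vec x,\vec y\in D^n$. For $C\ge 0$, $(D^n,f)$ is an Ameso($C$) pair if $D^n$ is an Ameso set, $f:D^n\to\mathbb{R}$ is bounded below, and $f(\vec x)+f(\vec y)+C\ge f(\lceil(\vec x+\vec y)/2\rceil)+f(\lfloor(\vec x+\vec y)/2\rfloor)$ for all $\vec x,\vec y\in D^n$. *)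

theory Defs
  imports Main "HOL.Complex_Main"
begin

(* One-dimensional (n = 1) instances of the paper's notions. *)

definition ameso_set :: "int set \<Rightarrow> bool" where
  "ameso_set D \<longleftrightarrow>
     (\<forall>x\<in>D. \<forall>y\<in>D. \<lceil>real_of_int (x + y) / 2\<rceil> \<in> D \<and> \<lfloor>real_of_int (x + y) / 2\<rfloor> \<in> D)"

definition ameso_pair :: "real \<Rightarrow> int set \<Rightarrow> (int \<Rightarrow> real) \<Rightarrow> bool" where
  "ameso_pair C D f \<longleftrightarrow>
     ameso_set D \<and> bdd_below (f ` D) \<and>
     (\<forall>x\<in>D. \<forall>y\<in>D.
        f x + f y + C \<ge> f \<lceil>real_of_int (x + y) / 2\<rceil> + f \<lfloor>real_of_int (x + y) / 2\<rfloor>)"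

end

theory Submission
  imports Defs
begin

(* If f y < f x0 for some y beyond x0 + b, let q be the rightmost maximiser of f on [x0, y];
   by the hypothesis on [x0, x0 + b], f q \<ge> f x0 + C > f y + C.  One of the reflections
   2q - y, 2q - x0 of y and x0 through q lies in [x0, y].  For 2q - y the midpoint inequality
   at q fails outright; for 2q - x0 it forces f (2q - x0) \<ge> f q with 2q - x0 > q,
   contradicting the choice of q. *)

definition midpoint_convex_on :: "real \<Rightarrow> int set \<Rightarrow> (int \<Rightarrow> real) \<Rightarrow> bool" where
  "midpoint_convex_on C D f \<longleftrightarrow>
     (\<forall>u\<in>D. \<forall>v\<in>D. \<forall>m. u + v = 2 * m \<longrightarrow> 2 * f m \<le> f u + f v + C)"

lemma ameso_pair_imp_midpoint_convex_on:
  assumes "ameso_pair C D f"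
  shows "midpoint_convex_on C D f"
  unfolding midpoint_convex_on_def
proof (intro ballI allI impI)
  fix u v m assume "u \<in> D" "v \<in> D" "u + v = 2 * m"
  moreover from \<open>u + v = 2 * m\<close> have "real_of_int (u + v) / 2 = real_of_int m"
    by simp
  ultimately show "2 * f m \<le> f u + f v + C"
    using assms unfolding ameso_pair_def by (metis ceiling_of_int floor_of_int mult_2)
qed

lemma midpoint_convex_on_subset:
  "midpoint_convex_on C D f \<Longrightarrow> E \<subseteq> D \<Longrightarrow> midpoint_convex_on C E f"
  unfolding midpoint_convex_on_def by blast

lemma obtain_rightmost_maximizer:
  fixes f :: "'b::linorder \<Rightarrow> 'a::linorder"
  assumes "finite S" "S \<noteq> {}"
  obtains q where "q \<in> S" "\<And>w. w \<in> S \<Longrightarrow> f w \<le> f q"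
    "\<And>w. w \<in> S \<Longrightarrow> q < w \<Longrightarrow> f w < f q"
proof -
  define Q where "Q = S \<inter> {q. f q = Max (f ` S)}"
  have "Max (f ` S) \<in> f ` S"
    using assms by simp
  then have "Q \<noteq> {}"
    unfolding Q_def by force
  moreover have "finite Q"
    using assms unfolding Q_def by simp
  ultimately have q: "Max Q \<in> Q" "\<And>w. w \<in> Q \<Longrightarrow> w \<le> Max Q"
    by auto
  have max: "f w \<le> f (Max Q)" if "w \<in> S" for w
    using assms q(1) that unfolding Q_def by auto
  have "f w < f (Max Q)" if "w \<in> S" "Max Q < w" for w
  proof -
    have "f w \<noteq> f (Max Q)"
      using q that unfolding Q_def by fastforce
    with max[OF \<open>w \<in> S\<close>] show ?thesis
      by simp
  qed
  with q(1) max show ?thesis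
    unfolding Q_def by (intro that) auto
qed

lemma midpoint_convex_on_right_end_near_max:
  assumes convex: "midpoint_convex_on C {a..y} f"
    and p: "p \<in> {a<..y}" "f a + C \<le> f p"
    and w: "w \<in> {a..y}"
  shows "f w \<le> f y + C"
proof -
  have mid: "2 * f m \<le> f u + f v + C" if "u \<in> {a..y}" "v \<in> {a..y}" "u + v = 2 * m" for u v m
    using convex that unfolding midpoint_convex_on_def by blast
  have "0 \<le> C"
    using mid[of a a a] p by simp
  obtain q where q: "q \<in> {a..y}" "\<And>w. w \<in> {a..y} \<Longrightarrow> f w \<le> f q"
    and rightmost: "\<And>w. w \<in> {a..y} \<Longrightarrow> q < w \<Longrightarrow> f w < f q"
    using obtain_rightmost_maximizer[of "{a..y}" f] p by auto
  have "a < q"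
  proof (rule ccontr)
    assume "\<not> a < q"
    then have "q = a" using q by simp
    then show False
      using rightmost[of p] p \<open>0 \<le> C\<close> by auto
  qed
  have "f q \<le> f y + C"
  proof (cases "a \<le> 2 * q - y")
    case True
    then show ?thesis
      using mid[of "2 * q - y" y q] q(1) q(2)[of "2 * q - y"] by auto
  next
    case False
    then have reflected: "2 * q - a \<in> {a..y}" "q < 2 * q - a"
      using \<open>a < q\<close> by auto
    have "2 * f q \<le> f a + f (2 * q - a) + C"
      using mid[of a "2 * q - a" q] reflected q(1) by auto
    then show ?thesis
      using rightmost[OF reflected] q(2)[of p] p by auto
  qed
  with q(2)[OF w] show ?thesis by simp
qed

theorem lemma3:
  fixes xs xt x0 b :: int and C :: real and f :: "int \<Rightarrow> real"
  assumes "xs < xt"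
    and "C \<ge> 0"
    and "ameso_pair C {xs..xt} f"
    and "x0 \<in> {xs..xt}"
    and "b > 0"
    and "{x0..x0 + b} \<subseteq> {xs..xt}"
    and "f x0 = Min (f ` {x0..x0 + b})"
    and "f x0 + C \<le> Max (f ` {x0..x0 + b})"
  shows "f x0 = Min (f ` {x0..xt})"
proof -
  have x0_minimal: "f x0 \<le> f w" if "w \<in> {x0..x0 + b}" for w
    using assms(7) that by simp
  obtain m where m: "m \<in> {x0..x0 + b}" "f m = Max (f ` {x0..x0 + b})"
    using Max_in[of "f ` {x0..x0 + b}"] assms(5) by fastforce
  obtain p where p: "p \<in> {x0<..x0 + b}" "f x0 + C \<le> f p"
  proof (cases "m = x0")
    case True
    then have "C = 0" using m assms(2,8) by simp
    then show ?thesis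
      using that[of "x0 + 1"] x0_minimal[of "x0 + 1"] assms(5) by simp
  next
    case False
    then show ?thesis using that[of m] m assms(8) by simp
  qed
  have "f x0 \<le> f y" if y: "y \<in> {x0..xt}" for y
  proof (cases "y \<le> x0 + b")
    case True
    then show ?thesis using x0_minimal y by simp
  next
    case False
    have "midpoint_convex_on C {x0..y} f"
      by (rule midpoint_convex_on_subset[OF ameso_pair_imp_midpoint_convex_on[OF assms(3)]])
        (use assms(4) y in auto)
    from midpoint_convex_on_right_end_near_max[OF this, of p p] p False
    show ?thesis by auto
  qed
  then show ?thesis
    using assms(1,4,5,6) by (intro Min_eqI[symmetric]) auto
qed

end
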